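(* Let $N_1>0$, $N_2>0$, $\chi>0$ and set $\alpha=\pi\big(\sqrt{N_2/\pi}+N_1/2\big)^2$, $\beta=\alpha/\sqrt{\pi N_2}$, $\tau=\sqrt{\pi N_2}\,N_1$, $\rho=1+N_2/\tau$ (so $\rho>1$). Define on $(0,1/\rho)$ $$S(\phi)=\frac{\phi}{\tau}\ln\frac{\alpha\phi}{\tau}+\frac{\phi}{N_1}\ln\frac{\beta\phi}{\tau}+(1-\rho\phi)\ln(1-\rho\phi),\qquad H(\phi)=\chi\phi(1-\rho\phi),$$ and $\kappa(\phi)=\dfrac{1}{36\phi(1-\phi)}$. Then: (1) $S$ and $-H$ are both convex on $(0,1/\rho)$; (2) $K(u,v):=\kappa(u)v^2$ is convex on $(0,1/\rho)\times\mathbb{R}$; (3) $K_1(u,v):=\big(\kappa(u)-\tfrac{1}{36}\big)v^2$ is convex on $(0,1/\rho)\times\mathbb{R}$ and $K_2(v):=\tfrac{1}{36}v^2$ is convex on $\mathbb{R}$. *)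

theory Defs
  imports "HOL-Analysis.Analysis"
begin

definition alpha_par :: "real \<Rightarrow> real \<Rightarrow> real" where
  "alpha_par N1 N2 = pi * (sqrt (N2 / pi) + N1 / 2)^2"

definition beta_par :: "real \<Rightarrow> real \<Rightarrow> real" where
  "beta_par N1 N2 = alpha_par N1 N2 / sqrt (pi * N2)"

definition tau_par :: "real \<Rightarrow> real \<Rightarrow> real" where
  "tau_par N1 N2 = sqrt (pi * N2) * N1"

definition rho_par :: "real \<Rightarrow> real \<Rightarrow> real" where
  "rho_par N1 N2 = 1 + N2 / tau_par N1 N2"

definition S_fun :: "real \<Rightarrow> real \<Rightarrow> real \<Rightarrow> real" where
  "S_fun N1 N2 \<phi> =
     \<phi> / tau_par N1 N2 * ln (alpha_par N1 N2 * \<phi> / tau_par N1 N2)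
   + \<phi> / N1 * ln (beta_par N1 N2 * \<phi> / tau_par N1 N2)
   + (1 - rho_par N1 N2 * \<phi>) * ln (1 - rho_par N1 N2 * \<phi>)"

definition H_fun :: "real \<Rightarrow> real \<Rightarrow> real \<Rightarrow> real \<Rightarrow> real" where
  "H_fun N1 N2 chi \<phi> = chi * \<phi> * (1 - rho_par N1 N2 * \<phi>)"

definition kappa :: "real \<Rightarrow> real" where
  "kappa \<phi> = 1 / (36 * \<phi> * (1 - \<phi>))"

end

theory Submission
  imports Defs
begin

text \<open>
  \<open>S\<close> is a positive combination of terms \<open>x ln (c x)\<close> and the entropy term
  \<open>(1 - \<rho> x) ln (1 - \<rho> x)\<close>, and \<open>-H\<close> is a convex quadratic. On
  \<open>(0, 1) \<supseteq> (0, 1/\<rho>)\<close> both kappa forms are quadratic-over-concave functions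
  \<open>v\<^sup>2 / w u\<close>, namely \<open>kappa u * v\<^sup>2 = v\<^sup>2 / (36 u (1 - u))\<close> and
  \<open>(kappa u - 1/36) * v\<^sup>2 = v\<^sup>2 / (36 / (1 - u + u\<^sup>2) - 36)\<close>; such a function is
  jointly convex whenever \<open>w\<close> is concave and positive, because
  \<open>(a + b)\<^sup>2 / (x + y) \<le> a\<^sup>2 / x + b\<^sup>2 / y\<close>.
\<close>

lemma convex_on_cong:
  assumes "convex_on S f" and "\<And>x. x \<in> S \<Longrightarrow> f x = g x"
  shows "convex_on S g"
  using assms by (auto simp: convex_on_def convex_def)

lemma convex_on_quadratic:
  fixes a b c :: real
  assumes "a \<ge> 0"
  shows "convex_on UNIV (\<lambda>x. a * x^2 + b * x + c)"
  using assms by (intro f''_ge0_imp_convex derivative_eq_intros | simp)+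

lemma convex_on_mult_ln_mult:
  fixes c :: real
  assumes "c > 0"
  shows "convex_on {0<..} (\<lambda>x. x * ln (c * x))"
proof (rule f''_ge0_imp_convex)
  fix x :: real assume "x \<in> {0<..}"
  then show "((\<lambda>x. x * ln (c * x)) has_real_derivative ln (c * x) + 1) (at x)"
    and "((\<lambda>x. ln (c * x) + 1) has_real_derivative 1 / x) (at x)"
    using assms by (auto intro!: derivative_eq_intros)
qed auto

lemma convex_on_one_minus_mult_ln:
  fixes r :: real
  assumes "r > 0"
  shows "convex_on {..<1/r} (\<lambda>x. (1 - r * x) * ln (1 - r * x))"
proof (rule f''_ge0_imp_convex)
  fix x :: real assume "x \<in> {..<1/r}"
  then have pos: "1 - r * x > 0" using assms by (simp add: field_simps)
  show "((\<lambda>x. (1 - r * x) * ln (1 - r * x)) has_real_derivative - r * ln (1 - r * x) - r) (at x)"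
    using pos by (intro derivative_eq_intros) auto
  show "((\<lambda>x. - r * ln (1 - r * x) - r) has_real_derivative r^2 / (1 - r * x)) (at x)"
    using pos by (auto intro!: derivative_eq_intros simp: power2_eq_square)
  show "r^2 / (1 - r * x) \<ge> 0" using pos by simp
qed auto

lemma one_minus_plus_power2_pos: "1 - u + u^2 > (0::real)"
proof -
  have "1 - u + u^2 = (u - 1/2)^2 + 3/4" by (simp add: power2_eq_square algebra_simps)
  moreover have "(u - 1/2)^2 \<ge> 0" by simp
  ultimately show ?thesis by linarith
qed

lemma concave_on_inverse_one_minus_plus_power2:
  "concave_on {0..1} (\<lambda>u::real. 1 / (1 - u + u^2))"
proof (rule f''_le0_imp_concave)
  fix u :: real assume u: "u \<in> {0..1}"
  have q: "1 - u + u^2 \<noteq> 0" using one_minus_plus_power2_pos[of u] by simp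
  show "((\<lambda>u. 1 / (1 - u + u^2)) has_real_derivative (1 - 2 * u) / (1 - u + u^2)^2) (at u)"
    using q by (auto intro!: derivative_eq_intros simp: power2_eq_square)
  show "((\<lambda>u. (1 - 2 * u) / (1 - u + u^2)^2)
          has_real_derivative - 6 * u * (1 - u) / (1 - u + u^2)^3) (at u)"
    using q by (auto intro!: derivative_eq_intros simp: divide_simps eval_nat_numeral) algebra
  show "- 6 * u * (1 - u) / (1 - u + u^2)^3 \<le> 0"
    using u one_minus_plus_power2_pos[of u] by (simp add: divide_nonpos_pos)
qed auto

lemma power2_add_divide_le:
  fixes a b x y :: real
  assumes "x > 0" and "y > 0"
  shows "(a + b)^2 / (x + y) \<le> a^2 / x + b^2 / y"
proof -
  have "(a^2 * y + b^2 * x) * (x + y) - (a + b)^2 * (x * y) = (a * y - b * x)^2"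
    by (simp add: power2_eq_square algebra_simps)
  then have "(a + b)^2 * (x * y) \<le> (a^2 * y + b^2 * x) * (x + y)"
    by (smt (verit) zero_le_power2)
  then show ?thesis using assms by (simp add: field_simps)
qed

lemma convex_on_power2_divide_concave:
  fixes w :: "real \<Rightarrow> real"
  assumes conc: "concave_on I w" and pos: "\<And>u. u \<in> I \<Longrightarrow> w u > 0"
  shows "convex_on (I \<times> UNIV) (\<lambda>(u, v). v^2 / w u)"
proof (rule convex_onI)
  show "convex (I \<times> (UNIV :: real set))"
    using concave_on_imp_convex[OF conc] by (simp add: convex_Times)
  fix t :: real and x y :: "real \<times> real"
  assume t: "0 < t" "t < 1" and "x \<in> I \<times> UNIV" "y \<in> I \<times> UNIV"
  then obtain u1 v1 u2 v2 where xy: "x = (u1, v1)" "y = (u2, v2)" and u: "u1 \<in> I" "u2 \<in> I"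
    by auto
  define s where "s = 1 - t"
  have s: "s > 0" using t by (simp add: s_def)
  have w: "w u1 > 0" "w u2 > 0" using pos u by auto
  have "w (s * u1 + t * u2) \<ge> s * w u1 + t * w u2"
    using concave_onD[OF conc, of t u1 u2] t u by (simp add: s_def)
  moreover have "s * w u1 + t * w u2 > 0" using s t w by (simp add: add_pos_pos)
  ultimately have "(s * v1 + t * v2)^2 / w (s * u1 + t * u2)
      \<le> (s * v1 + t * v2)^2 / (s * w u1 + t * w u2)"
    by (intro divide_left_mono) auto
  also have "\<dots> \<le> (s * v1)^2 / (s * w u1) + (t * v2)^2 / (t * w u2)"
    using s t w by (intro power2_add_divide_le) auto
  also have "\<dots> = s * (v1^2 / w u1) + t * (v2^2 / w u2)"
    using s t by (simp add: power2_eq_square mult_ac)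
  finally show "(\<lambda>(u, v). v^2 / w u) ((1 - t) *\<^sub>R x + t *\<^sub>R y)
      \<le> (1 - t) * (\<lambda>(u, v). v^2 / w u) x + t * (\<lambda>(u, v). v^2 / w u) y"
    using xy by (simp add: s_def)
qed

lemma rho_par_gt_one:
  assumes "N1 > 0" and "N2 > 0"
  shows "rho_par N1 N2 > 1"
  using assms by (simp add: rho_par_def tau_par_def)

lemma convex_on_S_fun:
  assumes "N1 > 0" and "N2 > 0"
  shows "convex_on {0<..<1 / rho_par N1 N2} (S_fun N1 N2)"
proof -
  define a b t r where "a = alpha_par N1 N2" and "b = beta_par N1 N2"
    and "t = tau_par N1 N2" and "r = rho_par N1 N2"
  have "sqrt (N2 / pi) + N1 / 2 > 0" using assms by (simp add: add_pos_pos)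
  then have a: "a > 0" by (simp add: a_def alpha_par_def)
  have t: "t > 0" using assms by (simp add: t_def tau_par_def)
  have b: "b > 0" using assms a by (simp add: b_def beta_par_def flip: a_def)
  have r: "r > 0" using rho_par_gt_one[OF assms] by (simp add: r_def)
  have S: "S_fun N1 N2 = (\<lambda>x. 1 / t * (x * ln (a / t * x)) + 1 / N1 * (x * ln (b / t * x))
      + (1 - r * x) * ln (1 - r * x))"
    by (simp add: fun_eq_iff S_fun_def a_def b_def t_def r_def)
  have "{0<..<1 / r} \<subseteq> {0<..}" and "{0<..<1 / r} \<subseteq> {..<1 / r}" by auto
  then show ?thesis
    unfolding S r_def[symmetric] using a b t r assms(1)
    by (intro convex_on_add convex_on_cmul convex_on_subset[OF convex_on_mult_ln_mult]
        convex_on_subset[OF convex_on_one_minus_mult_ln]) auto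
qed

lemma convex_on_kappa_mult_power2:
  "convex_on ({0<..<1} \<times> UNIV) (\<lambda>(u, v). kappa u * v^2)"
proof -
  have "convex_on {0<..<1} (\<lambda>u. 36 * u^2 + (- 36) * u + 0)"
    by (rule convex_on_subset[OF convex_on_quadratic]) auto
  then have "concave_on {0<..<1} (\<lambda>u. 36 * u * (1 - u))"
    unfolding concave_on_def
    by (rule convex_on_cong) (simp add: power2_eq_square algebra_simps)
  then have "convex_on ({0<..<1} \<times> UNIV) (\<lambda>(u, v). v^2 / (36 * u * (1 - u)))"
    by (rule convex_on_power2_divide_concave) auto
  then show ?thesis by (rule convex_on_cong) (auto simp: kappa_def)
qed

lemma convex_on_kappa_minus_mult_power2:
  "convex_on ({0<..<1} \<times> UNIV) (\<lambda>(u, v). (kappa u - 1/36) * v^2)"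
proof -
  define w where "w u = 36 * (1 / (1 - u + u^2)) - 36" for u :: real
  have w_eq: "w u = 36 * u * (1 - u) / (1 - u + u^2)" for u
    using one_minus_plus_power2_pos[of u] by (simp add: w_def field_simps power2_eq_square)
  have "concave_on {0..1} w"
    unfolding w_def
    by (intro concave_on_diff concave_on_cmul concave_on_inverse_one_minus_plus_power2)
      (auto simp: convex_on_const)
  then have "concave_on {0<..<1} w"
    unfolding concave_on_def by (rule convex_on_subset) auto
  moreover have "w u > 0" if "u \<in> {0<..<1}" for u
    using that one_minus_plus_power2_pos[of u] by (simp add: w_eq)
  ultimately have "convex_on ({0<..<1} \<times> UNIV) (\<lambda>(u, v). v^2 / w u)"
    by (rule convex_on_power2_divide_concave)
  then show ?thesis
  proof (rule convex_on_cong)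
    fix x :: "real \<times> real" assume "x \<in> {0<..<1} \<times> UNIV"
    then obtain u v where "x = (u, v)" and "0 < u" and "u < 1" by auto
    then show "(\<lambda>(u, v). v^2 / w u) x = (\<lambda>(u, v). (kappa u - 1/36) * v^2) x"
      using one_minus_plus_power2_pos[of u]
      by (simp add: w_eq kappa_def field_simps power2_eq_square)
  qed
qed

theorem proposition3p1:
  fixes N1 N2 chi :: real
  assumes "N1 > 0" and "N2 > 0" and "chi > 0"
  shows "rho_par N1 N2 > 1
    \<and> convex_on {0<..<1 / rho_par N1 N2} (S_fun N1 N2)
    \<and> convex_on {0<..<1 / rho_par N1 N2} (\<lambda>\<phi>. - H_fun N1 N2 chi \<phi>)
    \<and> convex_on ({0<..<1 / rho_par N1 N2} \<times> UNIV) (\<lambda>(u, v). kappa u * v^2)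
    \<and> convex_on ({0<..<1 / rho_par N1 N2} \<times> UNIV) (\<lambda>(u, v). (kappa u - 1/36) * v^2)
    \<and> convex_on UNIV (\<lambda>v::real. (1/36) * v^2)"
proof -
  let ?r = "rho_par N1 N2"
  have r: "?r > 1" using rho_par_gt_one[OF assms(1,2)] .
  then have "1 / ?r < 1" by simp
  then have sub: "{0<..<1 / ?r} \<times> UNIV \<subseteq> {0<..<1} \<times> (UNIV :: real set)" by auto
  have "convex_on UNIV (\<lambda>\<phi>. (chi * ?r) * \<phi>^2 + (- chi) * \<phi> + 0)"
    using assms r by (intro convex_on_quadratic) simp
  then have "convex_on {0<..<1 / ?r} (\<lambda>\<phi>. - H_fun N1 N2 chi \<phi>)"
    by (rule convex_on_subset[OF convex_on_cong]) (auto simp: H_fun_def power2_eq_square algebra_simps)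
  moreover have "convex_on UNIV (\<lambda>v::real. (1/36) * v^2)"
    using convex_on_quadratic[of "1/36" 0 0] by simp
  ultimately show ?thesis
    using r convex_on_S_fun[OF assms(1,2)]
      convex_on_subset[OF convex_on_kappa_mult_power2 sub]
      convex_on_subset[OF convex_on_kappa_minus_mult_power2 sub]
    by (simp add: convex_Times)
qed

end
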